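(* Let $T>0$ and let $\mathcal{H}$ be a dense subset of $C_K(\mathbb{R})$. Let $z=\{z(u,t),\ u\in[0,1],\ t\in(0,T]\}\in D([0,1],C(0,T])$ satisfy $z(u,t)\le z(v,t)$ for $u<v$, $t\in(0,T]$, and suppose that for all $\varphi\in\mathcal{H}$, $$\int_0^1\varphi(z(u,t))du\to\int_0^1\varphi(u)du,\quad t\to0.$$ Then $\lim_{t\to0}z(u,t)=u$ for each $u\in(0,1)$. Moreover, if $\lim_{t\to0}z(0,t)=0$ and $\lim_{t\to0}z(1,t)=1$, then the extension of $z$ to $[0,1]\times[0,T]$ given by $z(u,0)=u$ belongs to $D([0,1],C[0,T])$.
   Context: $C_K(\mathbb{R})$ is the class of continuous functions on $\mathbb{R}$ with compact support (density is with respect to uniform convergence). $C(0,T]$ is the space of continuous functions on $(0,T]$ with the metric of uniform convergence on compact subsets of $(0,T]$, $C[0,T]$ has the uniform metric, and $D([0,1],E)$ is the Skorohod space of càdlàg maps from $[0,1]$ to $E$. *)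

theory Defs
  imports "HOL-Analysis.Analysis"
begin

definition CK :: "(real \<Rightarrow> real) set" where
  "CK = {\<phi>. continuous_on UNIV \<phi> \<and> compact (closure {x. \<phi> x \<noteq> 0})}"

definition dense_in_CK :: "(real \<Rightarrow> real) set \<Rightarrow> bool" where
  "dense_in_CK H \<longleftrightarrow> H \<subseteq> CK \<and>
     (\<forall>\<phi>\<in>CK. \<forall>\<epsilon>>0. \<exists>\<psi>\<in>H. \<forall>x. \<bar>\<phi> x - \<psi> x\<bar> < \<epsilon>)"

definition right_unif_lim :: "real set \<Rightarrow> (real \<Rightarrow> real \<Rightarrow> real) \<Rightarrow> real \<Rightarrow> (real \<Rightarrow> real) \<Rightarrow> bool" where
  "right_unif_lim S z u g \<longleftrightarrow> (\<forall>\<epsilon>>0. \<exists>\<delta>>0. \<forall>v\<in>{0..1}. u < v \<and> v < u + \<delta> \<longrightarrow>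
      (\<forall>t\<in>S. \<bar>z v t - g t\<bar> < \<epsilon>))"

definition left_unif_lim :: "real set \<Rightarrow> (real \<Rightarrow> real \<Rightarrow> real) \<Rightarrow> real \<Rightarrow> (real \<Rightarrow> real) \<Rightarrow> bool" where
  "left_unif_lim S z u g \<longleftrightarrow> (\<forall>\<epsilon>>0. \<exists>\<delta>>0. \<forall>v\<in>{0..1}. u - \<delta> < v \<and> v < u \<longrightarrow>
      (\<forall>t\<in>S. \<bar>z v t - g t\<bar> < \<epsilon>))"

text \<open>z (as u \<mapsto> z u) belongs to D([0,1], C(0,T]), C(0,T] carrying the topology of
  uniform convergence on compact subsets of (0,T] (i.e. on every [s,T], 0<s\<le>T).\<close>
definition D_C_open :: "real \<Rightarrow> (real \<Rightarrow> real \<Rightarrow> real) \<Rightarrow> bool" where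
  "D_C_open T z \<longleftrightarrow>
     (\<forall>u\<in>{0..1}. continuous_on {0<..T} (z u)) \<and>
     (\<forall>u\<in>{0..<1}. \<forall>s\<in>{0<..T}. right_unif_lim {s..T} z u (z u)) \<and>
     (\<forall>u\<in>{0<..1}. \<exists>g. continuous_on {0<..T} g \<and> (\<forall>s\<in>{0<..T}. left_unif_lim {s..T} z u g))"

text \<open>z belongs to D([0,1], C[0,T]), C[0,T] with the uniform metric.\<close>
definition D_C_closed :: "real \<Rightarrow> (real \<Rightarrow> real \<Rightarrow> real) \<Rightarrow> bool" where
  "D_C_closed T z \<longleftrightarrow>
     (\<forall>u\<in>{0..1}. continuous_on {0..T} (z u)) \<and>
     (\<forall>u\<in>{0..<1}. right_unif_lim {0..T} z u (z u)) \<and>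
     (\<forall>u\<in>{0<..1}. \<exists>g. continuous_on {0..T} g \<and> left_unif_lim {0..T} z u g)"

end

theory Submission
  imports Defs
begin

(*
  By density, the convergence of the integrals of phi (z u t) du over [0,1] extends from H to all of
  C_K. Testing it against a continuous plateau phi that equals 1 on [0, u + e/2] and vanishes beyond
  u + e shows, since z(., t) is nondecreasing, that z u t < u + e for small t: otherwise the integral
  would be at most u while its limit is at least u + e/2. The substitution (u, x) |-> (1 - u, 1 - x)
  preserves the hypotheses and yields the lower bound.

  For the second claim, monotonicity traps z v t, and also the left limit g t of z(., t) at u, between
  z w t and z w' t for v between w and w'; these converge to w and w' as t -> 0. This controls the
  uniform limits in v for small t, while membership in D([0,1], C(0,T]) controls them on every [s,T].
*)

lemma integrable_on_continuous_comp_mono_on: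
  fixes f \<psi> :: "real \<Rightarrow> real"
  assumes f: "mono_on {a..b} f" and \<psi>: "continuous_on UNIV \<psi>"
  shows "(\<lambda>x. \<psi> (f x)) integrable_on {a..b}"
proof -
  have "space lborel = space lebesgue" "sets borel \<subseteq> sets lebesgue"
    by force+
  then have "f \<in> borel_measurable (lebesgue_on {a..b})"
    by (metis f borel_measurable_mono_on_fnc borel_measurable_subalgebra mono_restrict_space
        space_lborel space_restrict_space)
  moreover have "\<psi> \<in> borel_measurable borel"
    using \<psi> borel_measurable_continuous_onI by blast
  ultimately have meas: "(\<lambda>x. \<psi> (f x)) \<in> borel_measurable (lebesgue_on {a..b})"
    using measurable_compose by blast
  have "compact (\<psi> ` {f a..f b})"
    by (intro compact_continuous_image continuous_on_subset[OF \<psi>]) auto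
  then obtain B where B: "\<And>y. y \<in> {f a..f b} \<Longrightarrow> norm (\<psi> y) \<le> B"
    by (meson bounded_iff compact_imp_bounded imageI)
  have "norm (\<psi> (f x)) \<le> B" if "x \<in> {a..b}" for x
    using that f by (intro B) (auto simp: mono_on_def)
  then show ?thesis
    by (intro measurable_bounded_by_integrable_imp_integrable[OF meas, of "\<lambda>_. B"]) auto
qed

lemma integral_le_split:
  fixes f :: "real \<Rightarrow> real"
  assumes f: "f integrable_on {a..b}" and c: "a \<le> c" "c \<le> b"
    and "\<And>x. x \<in> {a..c} \<Longrightarrow> f x \<le> A" and "\<And>x. x \<in> {c..b} \<Longrightarrow> f x \<le> B"
  shows "integral {a..b} f \<le> A * (c - a) + B * (b - c)"
proof -
  have "integral {a..c} f \<le> integral {a..c} (\<lambda>_. A)"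
    by (rule integral_le) (use assms integrable_subinterval_real[OF f] in auto)
  moreover have "integral {c..b} f \<le> integral {c..b} (\<lambda>_. B)"
    by (rule integral_le) (use assms integrable_subinterval_real[OF f] in auto)
  ultimately show ?thesis
    using Henstock_Kurzweil_Integration.integral_combine[OF c f] c by (simp add: mult.commute)
qed

lemma integral_ge_split:
  fixes f :: "real \<Rightarrow> real"
  assumes f: "f integrable_on {a..b}" and c: "a \<le> c" "c \<le> b"
    and "\<And>x. x \<in> {a..c} \<Longrightarrow> A \<le> f x" and "\<And>x. x \<in> {c..b} \<Longrightarrow> B \<le> f x"
  shows "A * (c - a) + B * (b - c) \<le> integral {a..b} f"
proof -
  have "integral {a..c} (\<lambda>_. A) \<le> integral {a..c} f"
    by (rule integral_le) (use assms integrable_subinterval_real[OF f] in auto)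
  moreover have "integral {c..b} (\<lambda>_. B) \<le> integral {c..b} f"
    by (rule integral_le) (use assms integrable_subinterval_real[OF f] in auto)
  ultimately show ?thesis
    using Henstock_Kurzweil_Integration.integral_combine[OF c f] c by (simp add: mult.commute)
qed

lemma abs_integral_diff_le:
  fixes f g :: "real \<Rightarrow> real"
  assumes "f integrable_on {a..b}" "g integrable_on {a..b}" "a \<le> b"
    and "\<And>x. x \<in> {a..b} \<Longrightarrow> \<bar>f x - g x\<bar> \<le> e"
  shows "\<bar>integral {a..b} f - integral {a..b} g\<bar> \<le> e * (b - a)"
proof -
  have "0 \<le> e"
    using assms(3) assms(4)[of a] by auto
  then have "norm (integral {a..b} (\<lambda>x. f x - g x)) \<le> e * (b - a)"
    using integrable_bound[of e "\<lambda>x. f x - g x" a b] assms by (simp add: integrable_diff)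
  then show ?thesis
    using assms by (simp add: integral_diff)
qed

lemma integral_reflect_unit_interval:
  fixes f :: "real \<Rightarrow> real"
  shows "integral {0..1} (\<lambda>v. f (1 - v)) = integral {0..1} f"
proof -
  have "integral {0..1} (\<lambda>v. f (1 - v)) = integral {-1..0} (f \<circ> (+) 1)"
    using Henstock_Kurzweil_Integration.integral_reflect_real[of 1 0 "\<lambda>v. f (1 - v)"]
    by (simp only: minus_zero diff_minus_eq_add comp_def add.commute)
  also have "\<dots> = integral {0..1} f"
    using integral_shift_Icc_real[of "-1" 0 f 1] by simp
  finally show ?thesis .
qed

lemma CK_iff:
  "\<phi> \<in> CK \<longleftrightarrow> continuous_on UNIV \<phi> \<and> (\<exists>a b. \<forall>x. x \<notin> {a..b} \<longrightarrow> \<phi> x = 0)"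
proof
  assume "\<phi> \<in> CK"
  then have "bounded (closure {x. \<phi> x \<noteq> 0})"
    by (simp add: CK_def compact_imp_bounded)
  then obtain r where r: "\<And>x. x \<in> closure {x. \<phi> x \<noteq> 0} \<Longrightarrow> norm x \<le> r"
    unfolding bounded_iff by blast
  have "\<phi> x = 0" if "x \<notin> {-r..r}" for x
  proof (rule ccontr)
    assume "\<phi> x \<noteq> 0"
    then have "norm x \<le> r"
      by (intro r closure_subset[THEN subsetD]) simp
    with that show False
      by (simp add: abs_le_iff)
  qed
  with \<open>\<phi> \<in> CK\<close> show "continuous_on UNIV \<phi> \<and> (\<exists>a b. \<forall>x. x \<notin> {a..b} \<longrightarrow> \<phi> x = 0)"
    unfolding CK_def by blast
next
  assume "continuous_on UNIV \<phi> \<and> (\<exists>a b. \<forall>x. x \<notin> {a..b} \<longrightarrow> \<phi> x = 0)"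
  then obtain a b where \<phi>: "continuous_on UNIV \<phi>" "\<And>x. x \<notin> {a..b} \<Longrightarrow> \<phi> x = 0"
    by blast
  have "{x. \<phi> x \<noteq> 0} \<subseteq> {a..b}"
    using \<phi>(2) by blast
  then have "closure {x. \<phi> x \<noteq> 0} \<subseteq> {a..b}"
    by (simp add: closure_minimal)
  then have "compact (closure {x. \<phi> x \<noteq> 0})"
    by (meson bounded_closed_interval bounded_subset closed_closure compact_eq_bounded_closed)
  with \<phi> show "\<phi> \<in> CK"
    by (simp add: CK_def)
qed

lemma CK_reflect:
  assumes "\<phi> \<in> CK"
  shows "(\<lambda>x. \<phi> (1 - x)) \<in> CK"
proof -
  obtain a b where cont: "continuous_on UNIV \<phi>" and ab: "\<And>x. x \<notin> {a..b} \<Longrightarrow> \<phi> x = 0"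
    using assms unfolding CK_iff by blast
  have "continuous_on UNIV (\<lambda>x. \<phi> (1 - x))"
    by (rule continuous_on_compose2[OF cont]) (intro continuous_intros, simp)
  moreover have "\<phi> (1 - x) = 0" if "x \<notin> {1 - b..1 - a}" for x
    using that ab[of "1 - x"] by auto
  ultimately show ?thesis
    unfolding CK_iff by blast
qed

lemma tendsto_integral_comp_CK:
  fixes z :: "real \<Rightarrow> 'a \<Rightarrow> real"
  assumes H: "dense_in_CK H"
    and mono: "\<forall>\<^sub>F t in F. mono_on {0..1} (\<lambda>u. z u t)"
    and lim: "\<And>\<psi>. \<psi> \<in> H \<Longrightarrow>
      ((\<lambda>t. integral {0..1} (\<lambda>u. \<psi> (z u t))) \<longlongrightarrow> integral {0..1} \<psi>) F"
    and \<phi>: "\<phi> \<in> CK"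
  shows "((\<lambda>t. integral {0..1} (\<lambda>u. \<phi> (z u t))) \<longlongrightarrow> integral {0..1} \<phi>) F"
proof (rule tendstoI)
  fix \<epsilon> :: real assume "0 < \<epsilon>"
  then obtain \<psi> where \<psi>: "\<psi> \<in> H" "\<And>x. \<bar>\<phi> x - \<psi> x\<bar> < \<epsilon> / 3"
    using H \<phi> unfolding dense_in_CK_def by (meson divide_pos_pos zero_less_numeral)
  have \<psi>_close: "\<bar>\<phi> x - \<psi> x\<bar> \<le> \<epsilon> / 3" for x
    using \<psi>(2)[of x] by linarith
  have cont: "continuous_on UNIV \<phi>" "continuous_on UNIV \<psi>"
    using \<phi> \<psi> H by (auto simp: dense_in_CK_def CK_def)
  have "\<phi> integrable_on {0..1}" "\<psi> integrable_on {0..1}"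
    using cont by (meson continuous_on_subset integrable_continuous_real subset_UNIV)+
  from abs_integral_diff_le[OF this zero_le_one \<psi>_close]
  have limits_close: "\<bar>integral {0..1} \<phi> - integral {0..1} \<psi>\<bar> \<le> \<epsilon> / 3"
    by simp
  have "\<forall>\<^sub>F t in F. dist (integral {0..1} (\<lambda>u. \<psi> (z u t))) (integral {0..1} \<psi>) < \<epsilon> / 3"
    using tendstoD[OF lim[OF \<psi>(1)], of "\<epsilon> / 3"] \<open>0 < \<epsilon>\<close> by simp
  then show "\<forall>\<^sub>F t in F. dist (integral {0..1} (\<lambda>u. \<phi> (z u t))) (integral {0..1} \<phi>) < \<epsilon>"
    using mono
  proof eventually_elim
    case (elim t)
    have "(\<lambda>u. \<phi> (z u t)) integrable_on {0..1}" "(\<lambda>u. \<psi> (z u t)) integrable_on {0..1}"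
      using integrable_on_continuous_comp_mono_on[OF elim(2)] cont by blast+
    from abs_integral_diff_le[OF this zero_le_one \<psi>_close]
    have "\<bar>integral {0..1} (\<lambda>u. \<phi> (z u t)) - integral {0..1} (\<lambda>u. \<psi> (z u t))\<bar> \<le> \<epsilon> / 3"
      by simp
    then show ?case
      using elim(1) limits_close unfolding dist_real_def by linarith
  qed
qed

lemma CK_plateau_exists:
  fixes c d :: real
  assumes "c < d"
  obtains \<phi> where "\<phi> \<in> CK" "\<And>x. 0 \<le> \<phi> x \<and> \<phi> x \<le> 1"
    "\<And>x. 0 \<le> x \<Longrightarrow> x \<le> c \<Longrightarrow> \<phi> x = 1" "\<And>x. d \<le> x \<Longrightarrow> \<phi> x = 0"
proof
  define \<phi> where "\<phi> x = max 0 (min 1 (min (x + 1) ((d - x) / (d - c))))" for x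
  show "0 \<le> \<phi> x \<and> \<phi> x \<le> 1" for x
    unfolding \<phi>_def by auto
  show "\<phi> x = 1" if "0 \<le> x" "x \<le> c" for x
    unfolding \<phi>_def using that assms by auto
  have zero: "\<phi> x = 0" if "x \<le> -1 \<or> d \<le> x" for x
  proof -
    have "x + 1 \<le> 0 \<or> (d - x) / (d - c) \<le> 0"
      using that assms by (auto intro!: divide_nonpos_pos)
    then show ?thesis
      unfolding \<phi>_def by auto
  qed
  then show "\<phi> x = 0" if "d \<le> x" for x
    using that by blast
  have "continuous_on UNIV \<phi>"
    unfolding \<phi>_def using assms by (intro continuous_intros) auto
  with zero show "\<phi> \<in> CK"
    unfolding CK_iff by (metis atLeastAtMost_iff linorder_not_le order.strict_implies_order)
qed

lemma eventually_less_of_tendsto_integral_comp: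
  fixes z :: "real \<Rightarrow> 'a \<Rightarrow> real"
  assumes mono: "\<forall>\<^sub>F t in F. mono_on {0..1} (\<lambda>v. z v t)"
    and lim: "\<And>\<phi>. \<phi> \<in> CK \<Longrightarrow>
      ((\<lambda>t. integral {0..1} (\<lambda>v. \<phi> (z v t))) \<longlongrightarrow> integral {0..1} \<phi>) F"
    and u: "0 \<le> u" and e: "0 < e" "u + e \<le> 1"
  shows "\<forall>\<^sub>F t in F. z u t < u + e"
proof -
  obtain \<phi> where "\<phi> \<in> CK" and \<phi>_bounds: "\<And>x. 0 \<le> \<phi> x \<and> \<phi> x \<le> 1"
    and \<phi>_one: "\<And>x. 0 \<le> x \<Longrightarrow> x \<le> u + e / 2 \<Longrightarrow> \<phi> x = 1"
    and \<phi>_zero: "\<And>x. u + e \<le> x \<Longrightarrow> \<phi> x = 0"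
    using CK_plateau_exists[of "u + e / 2" "u + e"] e by auto
  have "continuous_on UNIV \<phi>"
    using \<open>\<phi> \<in> CK\<close> by (simp add: CK_def)
  have "1 * (u + e / 2 - 0) + 0 * (1 - (u + e / 2)) \<le> integral {0..1} \<phi>"
    using \<phi>_one \<phi>_bounds u e
    by (intro integral_ge_split integrable_continuous_real
        continuous_on_subset[OF \<open>continuous_on UNIV \<phi>\<close>]) auto
  then have mass: "u + e / 2 \<le> integral {0..1} \<phi>"
    by simp
  have "\<forall>\<^sub>F t in F. dist (integral {0..1} (\<lambda>v. \<phi> (z v t))) (integral {0..1} \<phi>) < e / 2"
    using tendstoD[OF lim[OF \<open>\<phi> \<in> CK\<close>], of "e / 2"] e by simp
  then show ?thesis
    using mono
  proof eventually_elim
    case (elim t)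
    show ?case
    proof (rule ccontr)
      assume "\<not> z u t < u + e"
      then have "\<phi> (z v t) = 0" if "v \<in> {u..1}" for v
        using that u e mono_onD[OF elim(2), of u v] by (intro \<phi>_zero) auto
      then have "integral {0..1} (\<lambda>v. \<phi> (z v t)) \<le> 1 * (u - 0) + 0 * (1 - u)"
        using \<phi>_bounds u e
        by (intro integral_le_split integrable_on_continuous_comp_mono_on[OF elim(2)]
            \<open>continuous_on UNIV \<phi>\<close>) auto
      then have "integral {0..1} (\<lambda>v. \<phi> (z v t)) \<le> u"
        by simp
      with elim(1) mass show False
        unfolding dist_real_def by linarith
    qed
  qed
qed

lemma tendsto_of_tendsto_integral_comp:
  fixes z :: "real \<Rightarrow> 'a \<Rightarrow> real"
  assumes mono: "\<forall>\<^sub>F t in F. mono_on {0..1} (\<lambda>v. z v t)"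
    and lim: "\<And>\<phi>. \<phi> \<in> CK \<Longrightarrow>
      ((\<lambda>t. integral {0..1} (\<lambda>v. \<phi> (z v t))) \<longlongrightarrow> integral {0..1} \<phi>) F"
    and u: "u \<in> {0<..<1}"
  shows "(z u \<longlongrightarrow> u) F"
proof (rule tendstoI)
  fix \<epsilon> :: real assume "0 < \<epsilon>"
  define e where "e = min \<epsilon> (min u (1 - u))"
  have e: "0 < e" "e \<le> \<epsilon>" "e \<le> u" "u + e \<le> 1"
    using \<open>0 < \<epsilon>\<close> u by (auto simp: e_def)
  define z' where "z' v t = 1 - z (1 - v) t" for v t
  have "\<forall>\<^sub>F t in F. mono_on {0..1} (\<lambda>v. z' v t)"
    using mono by eventually_elim (auto simp: mono_on_def z'_def)
  moreover have "((\<lambda>t. integral {0..1} (\<lambda>v. \<phi> (z' v t))) \<longlongrightarrow> integral {0..1} \<phi>) F"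
    if "\<phi> \<in> CK" for \<phi>
  proof -
    have "integral {0..1} (\<lambda>v. \<phi> (z' v t)) = integral {0..1} (\<lambda>v. \<phi> (1 - z v t))" for t
      using integral_reflect_unit_interval[of "\<lambda>v. \<phi> (1 - z v t)"] by (simp add: z'_def)
    moreover have "integral {0..1} (\<lambda>x. \<phi> (1 - x)) = integral {0..1} \<phi>"
      by (rule integral_reflect_unit_interval)
    ultimately show ?thesis
      using lim[OF CK_reflect[OF that]] by simp
  qed
  ultimately have "\<forall>\<^sub>F t in F. z' (1 - u) t < 1 - u + e"
    by (rule eventually_less_of_tendsto_integral_comp) (use e in auto)
  moreover have "\<forall>\<^sub>F t in F. z u t < u + e"
    by (rule eventually_less_of_tendsto_integral_comp[OF mono lim]) (use e u in auto)
  ultimately show "\<forall>\<^sub>F t in F. dist (z u t) u < \<epsilon>"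
    by eventually_elim (use e in \<open>auto simp: z'_def dist_real_def\<close>)
qed

definition unif_lim_within ::
    "real set \<Rightarrow> real set \<Rightarrow> (real \<Rightarrow> real \<Rightarrow> real) \<Rightarrow> real \<Rightarrow> (real \<Rightarrow> real) \<Rightarrow> bool" where
  "unif_lim_within V S z u g \<longleftrightarrow>
     (\<forall>\<epsilon>>0. \<exists>\<delta>>0. \<forall>v\<in>V. \<bar>v - u\<bar> < \<delta> \<longrightarrow> (\<forall>t\<in>S. \<bar>z v t - g t\<bar> < \<epsilon>))"

lemma right_unif_lim_iff: "right_unif_lim S z u g \<longleftrightarrow> unif_lim_within ({0..1} \<inter> {u<..}) S z u g"
proof -
  have "(v \<in> {0..1} \<and> u < v \<and> v < u + \<delta>) \<longleftrightarrow> (v \<in> {0..1} \<inter> {u<..} \<and> \<bar>v - u\<bar> < \<delta>)" for v \<delta>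
    by auto
  then show ?thesis
    unfolding right_unif_lim_def unif_lim_within_def Ball_def by (metis (no_types, lifting))
qed

lemma left_unif_lim_iff: "left_unif_lim S z u g \<longleftrightarrow> unif_lim_within ({0..1} \<inter> {..<u}) S z u g"
proof -
  have "(v \<in> {0..1} \<and> u - \<delta> < v \<and> v < u) \<longleftrightarrow> (v \<in> {0..1} \<inter> {..<u} \<and> \<bar>v - u\<bar> < \<delta>)" for v \<delta>
    by auto
  then show ?thesis
    unfolding left_unif_lim_def unif_lim_within_def Ball_def by (metis (no_types, lifting))
qed

lemma unif_lim_within_extend_0:
  fixes z :: "real \<Rightarrow> real \<Rightarrow> real"
  assumes T: "0 < T"
    and far: "\<And>s. s \<in> {0<..T} \<Longrightarrow> unif_lim_within V {s..T} z u g"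
    and near: "\<And>e. 0 < e \<Longrightarrow>
      \<exists>s>0. \<exists>d>0. \<forall>v\<in>V. \<bar>v - u\<bar> < d \<longrightarrow> (\<forall>t\<in>{0<..<s}. \<bar>z v t - g t\<bar> < e)"
  shows "unif_lim_within V {0..T} (\<lambda>v t. if t = 0 then v else z v t) u (\<lambda>t. if t = 0 then u else g t)"
  unfolding unif_lim_within_def
proof (intro allI impI)
  fix e :: real assume "0 < e"
  from near[OF this] obtain s d where "0 < s" "0 < d"
    and near_s: "\<And>v t. v \<in> V \<Longrightarrow> \<bar>v - u\<bar> < d \<Longrightarrow> t \<in> {0<..<s} \<Longrightarrow> \<bar>z v t - g t\<bar> < e"
    by blast
  have "unif_lim_within V {min s T..T} z u g"
    using far \<open>0 < s\<close> T by simp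
  from this[unfolded unif_lim_within_def, rule_format, OF \<open>0 < e\<close>] obtain d' where "0 < d'"
    and far_s: "\<And>v t. v \<in> V \<Longrightarrow> \<bar>v - u\<bar> < d' \<Longrightarrow> t \<in> {min s T..T} \<Longrightarrow> \<bar>z v t - g t\<bar> < e"
    by blast
  show "\<exists>\<delta>>0. \<forall>v\<in>V. \<bar>v - u\<bar> < \<delta> \<longrightarrow>
          (\<forall>t\<in>{0..T}. \<bar>(if t = 0 then v else z v t) - (if t = 0 then u else g t)\<bar> < e)"
  proof (intro exI[of _ "min e (min d d')"] conjI ballI impI)
    fix v t assume v: "v \<in> V" "\<bar>v - u\<bar> < min e (min d d')" and t: "t \<in> {0..T}"
    consider "t = 0" | "t \<in> {0<..<s}" | "t \<noteq> 0" "t \<in> {min s T..T}"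
      using t by fastforce
    then show "\<bar>(if t = 0 then v else z v t) - (if t = 0 then u else g t)\<bar> < e"
    proof cases
      case 1
      with v show ?thesis by simp
    next
      case 2
      with v near_s[of v t] show ?thesis by auto
    next
      case 3
      with v far_s[of v t] show ?thesis by simp
    qed
  qed (use \<open>0 < e\<close> \<open>0 < d\<close> \<open>0 < d'\<close> in auto)
qed

lemma continuous_on_Icc_extension:
  fixes f :: "real \<Rightarrow> 'b::topological_space"
  assumes "a < b" and f: "continuous_on {a<..b} f" and l: "(f \<longlongrightarrow> l) (at_right a)"
  shows "continuous_on {a..b} (\<lambda>t. if t = a then l else f t)"
  unfolding continuous_on_eq_continuous_within
proof
  fix x assume x: "x \<in> {a..b}"
  show "continuous (at x within {a..b}) (\<lambda>t. if t = a then l else f t)"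
  proof (cases "x = a")
    case True
    have "((\<lambda>t. if t = a then l else f t) \<longlongrightarrow> l) (at_right a)"
      by (rule Lim_transform_eventually[OF l]) (auto simp: eventually_at_filter)
    then show ?thesis
      using True \<open>a < b\<close> by (simp add: continuous_within at_within_Icc_at_right)
  next
    case False
    then have "a < x" "x \<le> b"
      using x by auto
    then have "at x within {a..b} = at x within {a<..b}"
      by (intro at_within_nhd[of _ "{a<..}"]) auto
    moreover have "(f \<longlongrightarrow> f x) (at x within {a<..b})"
      using f \<open>a < x\<close> \<open>x \<le> b\<close> by (simp add: continuous_on_eq_continuous_within continuous_within)
    then have "((\<lambda>t. if t = a then l else f t) \<longlongrightarrow> f x) (at x within {a<..b})"
      by (rule Lim_transform_eventually) (auto simp: eventually_at_filter)
    ultimately show ?thesis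
      using False by (simp add: continuous_within)
  qed
qed

lemma eventually_between_of_mono_on:
  fixes z :: "real \<Rightarrow> 'a \<Rightarrow> real"
  assumes mono: "\<forall>\<^sub>F t in F. mono_on {0..1} (\<lambda>v. z v t)"
    and lim: "(z w \<longlongrightarrow> w) F" "(z w' \<longlongrightarrow> w') F"
    and w: "0 \<le> w" "w \<le> w'" "w' \<le> 1" and "0 < e"
  shows "\<forall>\<^sub>F t in F. \<forall>v\<in>{w..w'}. w - e < z v t \<and> z v t < w' + e"
  using mono tendstoD[OF lim(1) \<open>0 < e\<close>] tendstoD[OF lim(2) \<open>0 < e\<close>]
proof eventually_elim
  case (elim t)
  show ?case
  proof
    fix v assume "v \<in> {w..w'}"
    then have "z w t \<le> z v t" "z v t \<le> z w' t"
      using w mono_onD[OF elim(1)] by auto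
    with elim(2,3) show "w - e < z v t \<and> z v t < w' + e"
      unfolding dist_real_def by linarith
  qed
qed

lemma right_unif_lim_extend_0:
  fixes z :: "real \<Rightarrow> real \<Rightarrow> real"
  assumes T: "0 < T" and D: "D_C_open T z"
    and mono: "\<forall>\<^sub>F t in at_right 0. mono_on {0..1} (\<lambda>v. z v t)"
    and lim: "\<And>v. v \<in> {0..1} \<Longrightarrow> (z v \<longlongrightarrow> v) (at_right 0)" and u: "u \<in> {0..<1}"
  shows "right_unif_lim {0..T} (\<lambda>v t. if t = 0 then v else z v t) u (\<lambda>t. if t = 0 then u else z u t)"
  unfolding right_unif_lim_iff
proof (rule unif_lim_within_extend_0[OF T])
  show "unif_lim_within ({0..1} \<inter> {u<..}) {s..T} z u (z u)" if "s \<in> {0<..T}" for s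
    using D that u by (simp add: D_C_open_def flip: right_unif_lim_iff)
  fix e :: real assume "0 < e"
  define w where "w = min (u + e / 4) 1"
  have w: "u < w" "w \<le> 1" "w - u \<le> e / 4"
    using u \<open>0 < e\<close> by (auto simp: w_def min_def)
  have "\<forall>\<^sub>F t in at_right 0. \<forall>v\<in>{u..w}. u - e / 4 < z v t \<and> z v t < w + e / 4"
    using u w \<open>0 < e\<close> by (intro eventually_between_of_mono_on[OF mono lim lim]) auto
  then obtain s where "0 < s"
    and s: "\<And>t. 0 < t \<Longrightarrow> t < s \<Longrightarrow> \<forall>v\<in>{u..w}. u - e / 4 < z v t \<and> z v t < w + e / 4"
    unfolding eventually_at_right_field by auto
  have "\<forall>v\<in>{0..1} \<inter> {u<..}. \<bar>v - u\<bar> < w - u \<longrightarrow> (\<forall>t\<in>{0<..<s}. \<bar>z v t - z u t\<bar> < e)"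
  proof (intro ballI impI)
    fix v t assume "v \<in> {0..1} \<inter> {u<..}" "\<bar>v - u\<bar> < w - u" "t \<in> {0<..<s}"
    then have "v \<in> {u..w}" "u \<in> {u..w}" "0 < t" "t < s"
      using w by auto
    then have "u - e / 4 < z v t" "z v t < w + e / 4" "u - e / 4 < z u t" "z u t < w + e / 4"
      using s by blast+
    then show "\<bar>z v t - z u t\<bar> < e"
      using w by linarith
  qed
  moreover have "0 < w - u"
    using w by simp
  ultimately show "\<exists>s>0. \<exists>d>0. \<forall>v\<in>{0..1} \<inter> {u<..}. \<bar>v - u\<bar> < d \<longrightarrow>
      (\<forall>t\<in>{0<..<s}. \<bar>z v t - z u t\<bar> < e)"
    using \<open>0 < s\<close> by blast
qed

lemma left_unif_lim_between:
  fixes z :: "real \<Rightarrow> real \<Rightarrow> real"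
  assumes L: "left_unif_lim S z u g" and t: "t \<in> S" and mono: "mono_on {0..1} (\<lambda>v. z v t)"
    and w: "0 \<le> w" "w < u" "u \<le> 1"
  shows "z w t \<le> g t \<and> g t \<le> z u t"
proof -
  have approx: "\<exists>v\<in>{w..u}. \<bar>z v t - g t\<bar> < \<eta>" if "0 < \<eta>" for \<eta>
  proof -
    obtain d where "0 < d" and d: "\<And>v. v \<in> {0..1} \<Longrightarrow> u - d < v \<Longrightarrow> v < u \<Longrightarrow> \<bar>z v t - g t\<bar> < \<eta>"
      using L \<open>0 < \<eta>\<close> t unfolding left_unif_lim_def by blast
    define v where "v = max w (u - d / 2)"
    have "v \<in> {w..u}" "v \<in> {0..1}" "u - d < v" "v < u"
      using w \<open>0 < d\<close> by (auto simp: v_def)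
    with d show ?thesis
      by blast
  qed
  have bounds: "z w t \<le> z v t \<and> z v t \<le> z u t" if "v \<in> {w..u}" for v
    using that w mono_onD[OF mono] by auto
  have close: "z w t \<le> g t + \<eta> \<and> g t \<le> z u t + \<eta>" if \<eta>: "0 < \<eta>" for \<eta>
  proof -
    obtain v where "v \<in> {w..u}" "\<bar>z v t - g t\<bar> < \<eta>"
      using approx[OF \<eta>] by blast
    with bounds[of v] show ?thesis
      by linarith
  qed
  have "z w t \<le> g t"
    by (rule field_le_epsilon) (use close in blast)
  moreover have "g t \<le> z u t"
    by (rule field_le_epsilon) (use close in blast)
  ultimately show ?thesis ..
qed

lemma eventually_left_limit_near:
  fixes z :: "real \<Rightarrow> real \<Rightarrow> real"
  assumes T: "0 < T"
    and mono: "\<And>t. t \<in> {0<..T} \<Longrightarrow> mono_on {0..1} (\<lambda>v. z v t)"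
    and lim: "\<And>v. v \<in> {0..1} \<Longrightarrow> (z v \<longlongrightarrow> v) (at_right 0)" and u: "u \<in> {0<..1}"
    and g: "\<And>s. s \<in> {0<..T} \<Longrightarrow> left_unif_lim {s..T} z u g"
    and w: "w \<in> {0..<u}" and "0 < e"
  shows "\<forall>\<^sub>F t in at_right 0. w - e < g t \<and> g t < u + e \<and> (\<forall>v\<in>{w..u}. w - e < z v t \<and> z v t < u + e)"
proof -
  have "\<forall>\<^sub>F t in at_right 0. t \<in> {0<..T}"
    using eventually_at_right_real[OF T] by eventually_elim auto
  moreover from this have "\<forall>\<^sub>F t in at_right 0. mono_on {0..1} (\<lambda>v. z v t)"
    by eventually_elim (rule mono)
  then have "\<forall>\<^sub>F t in at_right 0. \<forall>v\<in>{w..u}. w - e < z v t \<and> z v t < u + e"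
    using w u \<open>0 < e\<close> by (intro eventually_between_of_mono_on lim) auto
  ultimately show ?thesis
  proof eventually_elim
    case (elim t)
    have "z w t \<le> g t \<and> g t \<le> z u t"
      using left_unif_lim_between[OF g[OF elim(1)] _ mono[OF elim(1)]] elim(1) w u by auto
    moreover have "w - e < z w t" "z u t < u + e"
      using elim(2) w u by auto
    ultimately show ?case
      using elim(2) by auto
  qed
qed

lemma tendsto_left_limit_at_right_0:
  fixes z :: "real \<Rightarrow> real \<Rightarrow> real"
  assumes T: "0 < T"
    and mono: "\<And>t. t \<in> {0<..T} \<Longrightarrow> mono_on {0..1} (\<lambda>v. z v t)"
    and lim: "\<And>v. v \<in> {0..1} \<Longrightarrow> (z v \<longlongrightarrow> v) (at_right 0)" and u: "u \<in> {0<..1}"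
    and g: "\<And>s. s \<in> {0<..T} \<Longrightarrow> left_unif_lim {s..T} z u g"
  shows "(g \<longlongrightarrow> u) (at_right 0)"
proof (rule tendstoI)
  fix e :: real assume "0 < e"
  define w where "w = max 0 (u - e / 2)"
  have w: "w \<in> {0..<u}" "u - e / 2 \<le> w"
    using u \<open>0 < e\<close> by (auto simp: w_def)
  have "\<forall>\<^sub>F t in at_right 0. w - e / 2 < g t \<and> g t < u + e / 2 \<and>
      (\<forall>v\<in>{w..u}. w - e / 2 < z v t \<and> z v t < u + e / 2)"
    using assms w(1) \<open>0 < e\<close> by (intro eventually_left_limit_near) auto
  then show "\<forall>\<^sub>F t in at_right 0. dist (g t) u < e"
    by eventually_elim (use w(2) in \<open>auto simp: dist_real_def\<close>)
qed

lemma left_unif_lim_extend_0: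
  fixes z :: "real \<Rightarrow> real \<Rightarrow> real"
  assumes T: "0 < T"
    and mono: "\<And>t. t \<in> {0<..T} \<Longrightarrow> mono_on {0..1} (\<lambda>v. z v t)"
    and lim: "\<And>v. v \<in> {0..1} \<Longrightarrow> (z v \<longlongrightarrow> v) (at_right 0)" and u: "u \<in> {0<..1}"
    and g: "\<And>s. s \<in> {0<..T} \<Longrightarrow> left_unif_lim {s..T} z u g"
  shows "left_unif_lim {0..T} (\<lambda>v t. if t = 0 then v else z v t) u (\<lambda>t. if t = 0 then u else g t)"
  unfolding left_unif_lim_iff
proof (rule unif_lim_within_extend_0[OF T])
  show "unif_lim_within ({0..1} \<inter> {..<u}) {s..T} z u g" if "s \<in> {0<..T}" for s
    using g[OF that] by (simp add: left_unif_lim_iff)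
  fix e :: real assume "0 < e"
  define w where "w = max 0 (u - e / 4)"
  have w: "w \<in> {0..<u}" "u - w \<le> e / 4"
    using u \<open>0 < e\<close> by (auto simp: w_def max_def)
  have "\<forall>\<^sub>F t in at_right 0. w - e / 4 < g t \<and> g t < u + e / 4 \<and>
      (\<forall>v\<in>{w..u}. w - e / 4 < z v t \<and> z v t < u + e / 4)"
    using assms w(1) \<open>0 < e\<close> by (intro eventually_left_limit_near) auto
  then obtain s where "0 < s" and s: "\<And>t. 0 < t \<Longrightarrow> t < s \<Longrightarrow>
      w - e / 4 < g t \<and> g t < u + e / 4 \<and> (\<forall>v\<in>{w..u}. w - e / 4 < z v t \<and> z v t < u + e / 4)"
    unfolding eventually_at_right_field by auto
  have "\<forall>v\<in>{0..1} \<inter> {..<u}. \<bar>v - u\<bar> < u - w \<longrightarrow> (\<forall>t\<in>{0<..<s}. \<bar>z v t - g t\<bar> < e)"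
  proof (intro ballI impI)
    fix v t assume "v \<in> {0..1} \<inter> {..<u}" "\<bar>v - u\<bar> < u - w" "t \<in> {0<..<s}"
    then have "v \<in> {w..u}" "0 < t" "t < s"
      by auto
    then have "w - e / 4 < z v t" "z v t < u + e / 4" "w - e / 4 < g t" "g t < u + e / 4"
      using s by blast+
    then show "\<bar>z v t - g t\<bar> < e"
      using w(2) by linarith
  qed
  moreover have "0 < u - w"
    using w by simp
  ultimately show "\<exists>s>0. \<exists>d>0. \<forall>v\<in>{0..1} \<inter> {..<u}. \<bar>v - u\<bar> < d \<longrightarrow>
      (\<forall>t\<in>{0<..<s}. \<bar>z v t - g t\<bar> < e)"
    using \<open>0 < s\<close> by blast
qed

lemma D_C_open_left_limit_extend_0:
  fixes z :: "real \<Rightarrow> real \<Rightarrow> real"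
  assumes T: "0 < T" and D: "D_C_open T z"
    and mono: "\<And>t. t \<in> {0<..T} \<Longrightarrow> mono_on {0..1} (\<lambda>v. z v t)"
    and lim: "\<And>v. v \<in> {0..1} \<Longrightarrow> (z v \<longlongrightarrow> v) (at_right 0)" and u: "u \<in> {0<..1}"
  shows "\<exists>g. continuous_on {0..T} g \<and> left_unif_lim {0..T} (\<lambda>v t. if t = 0 then v else z v t) u g"
proof -
  obtain g where "continuous_on {0<..T} g" and g: "\<And>s. s \<in> {0<..T} \<Longrightarrow> left_unif_lim {s..T} z u g"
    using D u unfolding D_C_open_def by blast
  with T have "continuous_on {0..T} (\<lambda>t. if t = 0 then u else g t)"
    by (intro continuous_on_Icc_extension tendsto_left_limit_at_right_0[OF T mono lim u g])
  with left_unif_lim_extend_0[OF T mono lim u g] show ?thesis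
    by blast
qed

theorem lemma2p8:
  fixes T :: real and H :: "(real \<Rightarrow> real) set" and z :: "real \<Rightarrow> real \<Rightarrow> real"
  assumes "T > 0"
    and "dense_in_CK H"
    and "D_C_open T z"
    and "\<And>u v t. 0 \<le> u \<Longrightarrow> u < v \<Longrightarrow> v \<le> 1 \<Longrightarrow> 0 < t \<Longrightarrow> t \<le> T \<Longrightarrow> z u t \<le> z v t"
    and "\<And>\<phi>. \<phi> \<in> H \<Longrightarrow>
          ((\<lambda>t. integral {0..1} (\<lambda>u. \<phi> (z u t))) \<longlongrightarrow> integral {0..1} \<phi>) (at_right 0)"
  shows "(\<forall>u\<in>{0<..<1}. (z u \<longlongrightarrow> u) (at_right 0)) \<and>
         ((z 0 \<longlongrightarrow> 0) (at_right 0) \<and> (z 1 \<longlongrightarrow> 1) (at_right 0) \<longrightarrow>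
            D_C_closed T (\<lambda>u t. if t = 0 then u else z u t))"
proof -
  have mono: "mono_on {0..1} (\<lambda>v. z v t)" if "t \<in> {0<..T}" for t
  proof (rule mono_onI)
    fix v w :: real assume "v \<in> {0..1}" "w \<in> {0..1}" "v \<le> w"
    then show "z v t \<le> z w t"
      using assms(4)[of v w t] that by (cases "v = w") auto
  qed
  have eventually_mono: "\<forall>\<^sub>F t in at_right 0. mono_on {0..1} (\<lambda>v. z v t)"
    using eventually_at_right_real[OF \<open>T > 0\<close>] by eventually_elim (auto intro: mono)
  have "((\<lambda>t. integral {0..1} (\<lambda>v. \<phi> (z v t))) \<longlongrightarrow> integral {0..1} \<phi>) (at_right 0)"
    if "\<phi> \<in> CK" for \<phi>
    using tendsto_integral_comp_CK[OF assms(2) eventually_mono assms(5) that] .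
  then have interior: "\<forall>u\<in>{0<..<1}. (z u \<longlongrightarrow> u) (at_right 0)"
    using tendsto_of_tendsto_integral_comp[OF eventually_mono] by blast
  moreover have "D_C_closed T (\<lambda>u t. if t = 0 then u else z u t)"
    if "(z 0 \<longlongrightarrow> 0) (at_right 0)" "(z 1 \<longlongrightarrow> 1) (at_right 0)"
  proof -
    have lim: "(z u \<longlongrightarrow> u) (at_right 0)" if "u \<in> {0..1}" for u
      using interior that \<open>(z 0 \<longlongrightarrow> 0) (at_right 0)\<close> \<open>(z 1 \<longlongrightarrow> 1) (at_right 0)\<close>
      by (cases "u = 0 \<or> u = 1") auto
    have "continuous_on {0..T} (\<lambda>t. if t = 0 then u else z u t)" if "u \<in> {0..1}" for u
      using assms(1,3) that lim[OF that]
      by (intro continuous_on_Icc_extension) (auto simp: D_C_open_def)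
    with right_unif_lim_extend_0[OF assms(1,3) eventually_mono lim]
      D_C_open_left_limit_extend_0[OF assms(1,3) mono lim]
    show ?thesis
      unfolding D_C_closed_def by simp
  qed
  ultimately show ?thesis
    by blast
qed

end
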